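(* Let $S(1),S(0)\in\{0,1\}$, a real-valued $Y(0)$ and a covariate vector $\mathbf{X}$ be random variables, and assume Strong Monotonicity, $S(0)=0$ almost surely. Suppose there is a constant $\varepsilon$ (not depending on $\mathbf{X}$) with $\varepsilon = E\{Y(0)\mid U=s\bar{s},\mathbf{X}\}/E\{Y(0)\mid U=\bar{s}\bar{s},\mathbf{X}\}$. Then for $u=s\bar{s}$ and $u=\bar{s}\bar{s}$, $$\varepsilon = \frac{E\{Y(0)\mid U=s\bar{s}, e_u(\mathbf{X})\}}{E\{Y(0)\mid U=\bar{s}\bar{s}, e_u(\mathbf{X})\}}.$$
   Context: The principal stratum is $U=(S(1),S(0))$, whose values $(1,1),(1,0),(0,1),(0,0)$ are labelled $ss, s\bar{s}, \bar{s}s, \bar{s}\bar{s}$. Principal scores: $e_u(\mathbf{X}) = \Pr(U=u\mid \mathbf{X})$. Expectations are assumed to exist and denominators to be nonzero. *)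

theory Defs
  imports "HOL-Probability.Probability"
begin

definition gen_sigma :: "'a measure \<Rightarrow> ('a \<Rightarrow> 'b) \<Rightarrow> 'b measure \<Rightarrow> 'a measure" where
  "gen_sigma M Z N = vimage_algebra (space M) Z N"

definition cond_exp_event :: "'a measure \<Rightarrow> 'a measure \<Rightarrow> ('a \<Rightarrow> real) \<Rightarrow> 'a set \<Rightarrow> 'a \<Rightarrow> real" where
  "cond_exp_event M F Y A = (\<lambda>\<omega>. real_cond_exp M F (\<lambda>w. Y w * indicator A w) \<omega>
                                   / real_cond_exp M F (indicator A) \<omega>)"

definition stratum_event :: "'a measure \<Rightarrow> ('a \<Rightarrow> nat) \<Rightarrow> ('a \<Rightarrow> nat) \<Rightarrow> nat \<times> nat \<Rightarrow> 'a set" where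
  "stratum_event M S1 S0 u = {\<omega> \<in> space M. (S1 \<omega>, S0 \<omega>) = u}"

definition is_principal_score ::
  "'a measure \<Rightarrow> ('a \<Rightarrow> nat) \<Rightarrow> ('a \<Rightarrow> nat) \<Rightarrow> ('a \<Rightarrow> 'x) \<Rightarrow> 'x measure \<Rightarrow> nat \<times> nat \<Rightarrow> ('x \<Rightarrow> real) \<Rightarrow> bool" where
  "is_principal_score M S1 S0 X MX u e \<longleftrightarrow>
     e \<in> borel_measurable MX \<and>
     (AE \<omega> in M. e (X \<omega>) = real_cond_exp M (gen_sigma M X MX) (indicator (stratum_event M S1 S0 u)) \<omega>)"

end

theory Submission
  imports Defs
begin

text \<open>Under strong monotonicity the events \<open>A = {U = s s\<^sup>-}\<close> and \<open>B = {U = s\<^sup>- s\<^sup>-}\<close>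
  partition the sample space almost surely, so \<open>P(A | X)\<close> and \<open>P(B | X)\<close> are \<open>e(X)\<close> and
  \<open>1 - e(X)\<close>, in one order or the other, for either principal score \<open>e\<close>; both are functions
  of \<open>e(X)\<close>, and \<open>\<sigma>(e(X)) \<subseteq> \<sigma>(X)\<close>. The hypothesis on \<open>\<epsilon>\<close> says
  \<open>E[Y(0) 1\<^sub>A | X] = h E[Y(0) 1\<^sub>B | X]\<close> with \<open>h = \<epsilon> P(A | X) / P(B | X)\<close>, a function of \<open>e(X)\<close>.
  Conditioning on \<open>e(X)\<close> by the tower property and pulling out \<open>h\<close> gives the same relation
  given \<open>e(X)\<close>, while \<open>P(A | \<cdot>)\<close> and \<open>P(B | \<cdot>)\<close> do not change; so the ratio is again \<open>\<epsilon>\<close>.\<close>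

lemma subalgebra_gen_sigma:
  assumes "X \<in> measurable M N"
  shows "subalgebra M (gen_sigma M X N)"
  unfolding subalgebra_def gen_sigma_def
  using sets_image_in_sets[OF refl assms] by simp

lemma measurable_gen_sigma:
  assumes "X \<in> measurable M N"
  shows "X \<in> measurable (gen_sigma M X N) N"
  unfolding gen_sigma_def
  by (rule measurable_vimage_algebra1) (use measurable_space[OF assms] in blast)

lemma subalgebra_gen_sigma_comp:
  assumes "X \<in> measurable M N" "f \<in> measurable N K"
  shows "subalgebra (gen_sigma M X N) (gen_sigma M (\<lambda>\<omega>. f (X \<omega>)) K)"
proof -
  have "(\<lambda>\<omega>. f (X \<omega>)) \<in> measurable (gen_sigma M X N) K"
    using measurable_gen_sigma[OF assms(1)] assms(2) by measurable
  then show ?thesis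
    unfolding subalgebra_def gen_sigma_def
    using sets_image_in_sets[of "vimage_algebra (space M) X N" "space M"] by simp
qed

lemma stratum_event_sets:
  assumes "S1 \<in> measurable M (count_space UNIV)" "S0 \<in> measurable M (count_space UNIV)"
  shows "stratum_event M S1 S0 u \<in> sets M"
proof -
  have "stratum_event M S1 S0 u = (S1 -` {fst u} \<inter> space M) \<inter> (S0 -` {snd u} \<inter> space M)"
    by (auto simp: stratum_event_def)
  then show ?thesis
    using measurable_sets[OF assms(1)] measurable_sets[OF assms(2)] by auto
qed

lemma stratum_events_partition:
  assumes "\<forall>\<omega>\<in>space M. S1 \<omega> \<in> {0, 1}" "AE \<omega> in M. S0 \<omega> = 0"
  shows "AE \<omega> in M. indicator (stratum_event M S1 S0 (1, 0)) \<omega>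
                     + indicator (stratum_event M S1 S0 (0, 0)) \<omega> = (1::real)"
  using assms(2) AE_space
  by eventually_elim (use assms(1) in \<open>auto simp: stratum_event_def indicator_def\<close>)

lemma (in finite_measure_subalgebra) real_cond_exp_indicator_add_eq_1:
  assumes "A \<in> sets M" "B \<in> sets M"
    and "AE x in M. indicator A x + indicator B x = (1::real)"
  shows "AE x in M. real_cond_exp M F (indicator A) x + real_cond_exp M F (indicator B) x = 1"
proof -
  have "integrable M (indicator A :: 'a \<Rightarrow> real)" "integrable M (indicator B :: 'a \<Rightarrow> real)"
    using assms(1,2) by (auto intro!: integrable_real_indicator simp: less_top[symmetric])
  then have "AE x in M. real_cond_exp M F (\<lambda>x. indicator A x + indicator B x) x
                 = real_cond_exp M F (indicator A) x + real_cond_exp M F (indicator B) x"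
    by (rule real_cond_exp_add)
  moreover have "AE x in M. real_cond_exp M F (\<lambda>x. indicator A x + indicator B x) x
                     = real_cond_exp M F (\<lambda>x. 1) x"
    using assms by (intro real_cond_exp_cong) auto
  moreover have "AE x in M. real_cond_exp M F (\<lambda>x. 1) x = (1::real)"
    by (rule real_cond_exp_F_meas) auto
  ultimately show ?thesis
    by eventually_elim simp
qed

lemma cond_prob_stratum_eq_score:
  assumes u: "u \<in> {(1, 0), (0, 0)}" and score: "is_principal_score M S1 S0 X MX u e"
    and sum: "AE \<omega> in M. real_cond_exp M (gen_sigma M X MX) (indicator (stratum_event M S1 S0 (1, 0))) \<omega>
                       + real_cond_exp M (gen_sigma M X MX) (indicator (stratum_event M S1 S0 (0, 0))) \<omega> = 1"
  shows "AE \<omega> in M. real_cond_exp M (gen_sigma M X MX) (indicator (stratum_event M S1 S0 (1, 0))) \<omega>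
                     = (if u = (1, 0) then e (X \<omega>) else 1 - e (X \<omega>))"
proof -
  have score_eq: "AE \<omega> in M.
      e (X \<omega>) = real_cond_exp M (gen_sigma M X MX) (indicator (stratum_event M S1 S0 u)) \<omega>"
    using score unfolding is_principal_score_def by simp
  from u show ?thesis
  proof (elim insertE emptyE)
    assume u: "u = (1, 0)"
    from score_eq[unfolded u] show ?thesis
      by (auto simp: u elim: AE_mp)
  next
    assume u: "u = (0, 0)"
    from score_eq[unfolded u] sum show ?thesis
      by eventually_elim (simp add: u)
  qed
qed

lemma (in sigma_finite_subalgebra) real_cond_exp_nested_eq:
  assumes "subalgebra M H" "subalgebra H F" "integrable M f"
    and "AE x in M. real_cond_exp M H f x = g x" "g \<in> borel_measurable F"
  shows "AE x in M. real_cond_exp M F f x = g x"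
proof -
  interpret H: sigma_finite_subalgebra M H
    using nested_subalg_is_sigma_finite[OF assms(1,2)] .
  have g_M: "g \<in> borel_measurable M"
    using measurable_from_subalg[OF subalg assms(5)] .
  have "integrable M g"
    using integrable_cong_AE[OF _ g_M assms(4)] H.real_cond_exp_int(1)[OF assms(3)] by simp
  then have "AE x in M. real_cond_exp M F g x = g x"
    using assms(5) by (rule real_cond_exp_F_meas)
  moreover have "AE x in M. real_cond_exp M F (real_cond_exp M H f) x = real_cond_exp M F g x"
    using assms(4) g_M by (intro real_cond_exp_cong) auto
  moreover have "AE x in M. real_cond_exp M F (real_cond_exp M H f) x = real_cond_exp M F f x"
    using assms(1-3) by (rule real_cond_exp_nested_subalg)
  ultimately show ?thesis
    by eventually_elim simp
qed

lemma (in sigma_finite_subalgebra) real_cond_exp_nested_mult: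
  assumes "subalgebra M H" "subalgebra H F" "integrable M f" "integrable M g"
    and "AE x in M. real_cond_exp M H f x = h x * real_cond_exp M H g x" "h \<in> borel_measurable F"
  shows "AE x in M. real_cond_exp M F f x = h x * real_cond_exp M F g x"
proof -
  interpret H: sigma_finite_subalgebra M H
    using nested_subalg_is_sigma_finite[OF assms(1,2)] .
  have [measurable]: "h \<in> borel_measurable M"
    using measurable_from_subalg[OF subalg assms(6)] .
  have "integrable M (\<lambda>x. h x * real_cond_exp M H g x)"
    by (rule integrable_cong_AE_imp[OF H.real_cond_exp_int(1)[OF assms(3)] _ assms(5)]) measurable
  then have "AE x in M. real_cond_exp M F (\<lambda>x. h x * real_cond_exp M H g x) x
                 = h x * real_cond_exp M F (real_cond_exp M H g) x"
    using assms(6) by (intro real_cond_exp_mult) auto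
  moreover have "AE x in M. real_cond_exp M F (real_cond_exp M H f) x
                     = real_cond_exp M F (\<lambda>x. h x * real_cond_exp M H g x) x"
    using assms(5) by (intro real_cond_exp_cong) auto
  moreover have "AE x in M. real_cond_exp M F (real_cond_exp M H f) x = real_cond_exp M F f x"
    using assms(1-3) by (rule real_cond_exp_nested_subalg)
  moreover have "AE x in M. real_cond_exp M F (real_cond_exp M H g) x = real_cond_exp M F g x"
    using assms(1,2,4) by (rule real_cond_exp_nested_subalg)
  ultimately show ?thesis
    by eventually_elim simp
qed

lemma (in finite_measure_subalgebra) cond_exp_event_ratio_nested:
  assumes sub: "subalgebra M H" "subalgebra H F"
    and sets: "A \<in> sets M" "B \<in> sets M" and Y: "integrable M Y"
    and prob_A: "AE x in M. real_cond_exp M H (indicator A) x = a x" "a \<in> borel_measurable F"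
    and prob_B: "AE x in M. real_cond_exp M H (indicator B) x = b x" "b \<in> borel_measurable F"
    and nz: "AE x in M. a x \<noteq> 0" "AE x in M. b x \<noteq> 0"
      "AE x in M. cond_exp_event M H Y B x \<noteq> 0" "AE x in M. cond_exp_event M F Y B x \<noteq> 0"
    and ratio: "AE x in M. \<epsilon> = cond_exp_event M H Y A x / cond_exp_event M H Y B x"
  shows "AE x in M. \<epsilon> = cond_exp_event M F Y A x / cond_exp_event M F Y B x"
proof -
  have int_ind: "integrable M (indicator A :: 'a \<Rightarrow> real)" "integrable M (indicator B :: 'a \<Rightarrow> real)"
    using sets by (auto intro!: integrable_real_indicator simp: less_top[symmetric])
  have int_Y: "integrable M (\<lambda>x. Y x * indicator A x)" "integrable M (\<lambda>x. Y x * indicator B x)"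
    using integrable_mult_indicator[OF sets(1) Y] integrable_mult_indicator[OF sets(2) Y]
    by (simp_all add: mult.commute)
  define h where "h x = \<epsilon> * a x / b x" for x
  have h_F: "h \<in> borel_measurable F"
    unfolding h_def using prob_A(2) prob_B(2) by measurable
  have "AE x in M. real_cond_exp M H (\<lambda>x. Y x * indicator A x) x
                 = h x * real_cond_exp M H (\<lambda>x. Y x * indicator B x) x"
    using prob_A(1) prob_B(1) nz(1-3) ratio
    by eventually_elim (auto simp: h_def cond_exp_event_def field_simps)
  then have "AE x in M. real_cond_exp M F (\<lambda>x. Y x * indicator A x) x
                 = h x * real_cond_exp M F (\<lambda>x. Y x * indicator B x) x"
    using sub int_Y h_F by (intro real_cond_exp_nested_mult) auto
  moreover have "AE x in M. real_cond_exp M F (indicator A) x = a x"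
    using sub int_ind(1) prob_A by (rule real_cond_exp_nested_eq)
  moreover have "AE x in M. real_cond_exp M F (indicator B) x = b x"
    using sub int_ind(2) prob_B by (rule real_cond_exp_nested_eq)
  ultimately show ?thesis
    using nz(1,2,4)
    by eventually_elim (auto simp: h_def cond_exp_event_def field_simps)
qed

theorem lemmaA4:
  fixes M :: "'a measure" and MX :: "'x measure"
    and S1 S0 :: "'a \<Rightarrow> nat" and Y0 :: "'a \<Rightarrow> real" and X :: "'a \<Rightarrow> 'x"
    and \<epsilon> :: real
  assumes "prob_space M"
    and S1_meas: "S1 \<in> measurable M (count_space UNIV)"
    and S0_meas: "S0 \<in> measurable M (count_space UNIV)"
    and S1_bin: "\<forall>\<omega>\<in>space M. S1 \<omega> \<in> {0, 1}"
    and S0_bin: "\<forall>\<omega>\<in>space M. S0 \<omega> \<in> {0, 1}"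
    and X_meas: "X \<in> measurable M MX"
    and Y0_int: "integrable M Y0"
    and strong_mono: "AE \<omega> in M. S0 \<omega> = 0"
    and nz_X_10: "AE \<omega> in M. real_cond_exp M (gen_sigma M X MX) (indicator (stratum_event M S1 S0 (1, 0))) \<omega> \<noteq> 0"
    and nz_X_00: "AE \<omega> in M. real_cond_exp M (gen_sigma M X MX) (indicator (stratum_event M S1 S0 (0, 0))) \<omega> \<noteq> 0"
    and nz_X_ratio: "AE \<omega> in M. cond_exp_event M (gen_sigma M X MX) Y0 (stratum_event M S1 S0 (0, 0)) \<omega> \<noteq> 0"
    and eps: "AE \<omega> in M. \<epsilon> = cond_exp_event M (gen_sigma M X MX) Y0 (stratum_event M S1 S0 (1, 0)) \<omega>
                              / cond_exp_event M (gen_sigma M X MX) Y0 (stratum_event M S1 S0 (0, 0)) \<omega>"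
  shows "\<forall>u \<in> {(1, 0), (0, 0)}. \<forall>e. is_principal_score M S1 S0 X MX u e \<longrightarrow>
           (let G = gen_sigma M (\<lambda>\<omega>. e (X \<omega>)) borel in
             ((AE \<omega> in M. real_cond_exp M G (indicator (stratum_event M S1 S0 (1, 0))) \<omega> \<noteq> 0)
              \<and> (AE \<omega> in M. real_cond_exp M G (indicator (stratum_event M S1 S0 (0, 0))) \<omega> \<noteq> 0)
              \<and> (AE \<omega> in M. cond_exp_event M G Y0 (stratum_event M S1 S0 (0, 0)) \<omega> \<noteq> 0))
             \<longrightarrow> (AE \<omega> in M. \<epsilon> = cond_exp_event M G Y0 (stratum_event M S1 S0 (1, 0)) \<omega>
                                   / cond_exp_event M G Y0 (stratum_event M S1 S0 (0, 0)) \<omega>))"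
  unfolding Let_def
proof (intro ballI allI impI, elim conjE)
  fix u e
  assume u: "u \<in> {(1, 0), (0, 0)}" and score: "is_principal_score M S1 S0 X MX u e"
  let ?F = "gen_sigma M X MX" and ?G = "gen_sigma M (\<lambda>\<omega>. e (X \<omega>)) borel"
  let ?A = "stratum_event M S1 S0 (1, 0)" and ?B = "stratum_event M S1 S0 (0, 0)"
  assume nz_G: "AE \<omega> in M. cond_exp_event M ?G Y0 ?B \<omega> \<noteq> 0"
  interpret prob_space M by fact
  have e_meas: "e \<in> borel_measurable MX"
    using score unfolding is_principal_score_def by simp
  have sub: "subalgebra M ?F" "subalgebra ?F ?G"
    using subalgebra_gen_sigma[OF X_meas] subalgebra_gen_sigma_comp[OF X_meas e_meas] .
  interpret G: finite_measure_subalgebra M ?G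
    using sub by unfold_locales (auto simp: subalgebra_def)
  have eX_G: "(\<lambda>\<omega>. e (X \<omega>)) \<in> borel_measurable ?G"
    using measurable_compose[OF X_meas e_meas] by (rule measurable_gen_sigma)
  then have eX_G': "(\<lambda>\<omega>. 1 - e (X \<omega>)) \<in> borel_measurable ?G"
    by measurable
  interpret F: finite_measure_subalgebra M ?F
    using sub by unfold_locales
  have sets: "?A \<in> sets M" "?B \<in> sets M"
    using stratum_event_sets[OF S1_meas S0_meas] by auto
  have sum: "AE \<omega> in M. real_cond_exp M ?F (indicator ?A) \<omega> + real_cond_exp M ?F (indicator ?B) \<omega> = 1"
    using sets stratum_events_partition[OF S1_bin strong_mono] by (rule F.real_cond_exp_indicator_add_eq_1)
  define r where "r = (\<lambda>\<omega>. if u = (1, 0) then e (X \<omega>) else 1 - e (X \<omega>))"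
  have r_G: "r \<in> borel_measurable ?G" "(\<lambda>\<omega>. 1 - r \<omega>) \<in> borel_measurable ?G"
    using eX_G eX_G' by (cases "u = (1, 0)"; simp add: r_def)+
  have prob_A: "AE \<omega> in M. real_cond_exp M ?F (indicator ?A) \<omega> = r \<omega>"
    unfolding r_def using u score sum by (rule cond_prob_stratum_eq_score)
  with sum have prob_B: "AE \<omega> in M. real_cond_exp M ?F (indicator ?B) \<omega> = 1 - r \<omega>"
    by eventually_elim simp
  have "AE \<omega> in M. r \<omega> \<noteq> 0" "AE \<omega> in M. 1 - r \<omega> \<noteq> 0"
    using nz_X_10 prob_A nz_X_00 prob_B by (auto elim: AE_mp)
  then show "AE \<omega> in M. \<epsilon> = cond_exp_event M ?G Y0 ?A \<omega> / cond_exp_event M ?G Y0 ?B \<omega>"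
    by (rule G.cond_exp_event_ratio_nested[OF sub sets Y0_int prob_A r_G(1) prob_B r_G(2)
          _ _ nz_X_ratio nz_G eps])
qed

end
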